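(* Let $(x_m)_{m\ge0}$, $(y_n)_{n\ge1}$, $(z_m)_{m\ge0}$ be elements of a commutative ring, and define an array $(a_{n,m})_{n,m\ge0}$ by $a_{0,m}=x_m$ for all $m\ge0$ and $$a_{n,m}=z_m\,a_{n-1,m+1}+y_n\,a_{n-1,m}\qquad(n\ge1,\ m\ge 0).$$ Then for all $n,m\ge0$, $$a_{n,m}=\sum_{k=0}^n x_{m+k}\,(z_mz_{m+1}\cdots z_{m+k-1})\,e_{n-k}(y_1,y_2,\ldots,y_n),$$ where $e_i$ denotes the $i$-th elementary symmetric polynomial (with $e_0=1$) and the empty product equals $1$. *)

theory Defs
  imports Main
begin

definition elem_sym :: "nat \<Rightarrow> (nat \<Rightarrow> 'a::comm_ring_1) \<Rightarrow> nat \<Rightarrow> 'a" where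
  "elem_sym i y n = (\<Sum>S \<in> {S. S \<subseteq> {1..n} \<and> card S = i}. \<Prod>j\<in>S. y j)"

end

theory Submission
  imports Defs
begin

(* The array a(n,m) is determined by its row a(0,-) = x and the two-term recursion, so
   it suffices to show that the claimed closed form
     C(n,m) = sum_{k=0..n} x(m+k) * z_m ... z_{m+k-1} * e_{n-k}(y_1,...,y_n)
   satisfies the same initial row and the same recursion; induction on n then finishes.

   The only combinatorial input is the Pascal-type recursion of elementary symmetric
   polynomials, e_{i+1}(y_1..y_{n+1}) = e_{i+1}(y_1..y_n) + y_{n+1} e_i(y_1..y_n),
   which we prove for elementary symmetric sums over an arbitrary finite index set,
   together with e_0 = 1 and e_i = 0 for i beyond the number of variables.
   Splitting each e_{n+1-k}(y_1..y_{n+1}) in C(n+1,m) by this recursion, the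
   y_{n+1}-part is y_{n+1} C(n,m), and the remaining part, after the shift k = k'+1
   and factoring out z_m, is z_m C(n,m+1). *)

definition esym_set :: "nat \<Rightarrow> ('b \<Rightarrow> 'a::comm_ring_1) \<Rightarrow> 'b set \<Rightarrow> 'a" where
  "esym_set i y A = (\<Sum>S \<in> {S. S \<subseteq> A \<and> card S = i}. \<Prod>j\<in>S. y j)"

lemma elem_sym_eq_esym_set: "elem_sym i y n = esym_set i y {1..n}"
  by (simp add: elem_sym_def esym_set_def)

text \<open>Only the empty set has zero elements.\<close>
lemma esym_set_0: "finite A \<Longrightarrow> esym_set 0 y A = 1"
proof -
  assume "finite A"
  then have "{S. S \<subseteq> A \<and> card S = 0} = {{}}"
    by (auto dest: finite_subset)
  then show ?thesis by (simp add: esym_set_def)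
qed

text \<open>There are no subsets with more elements than A itself.\<close>
lemma esym_set_beyond_card:
  assumes "finite A" and "card A < i"
  shows "esym_set i y A = 0"
proof -
  have "{S. S \<subseteq> A \<and> card S = i} = {}"
    using card_mono[OF \<open>finite A\<close>] \<open>card A < i\<close> by (auto simp: not_less[symmetric])
  then show ?thesis unfolding esym_set_def by (simp only: sum.empty)
qed

lemma subsets_of_insert_card_Suc:
  assumes "finite A" and "a \<notin> A"
  shows "{S. S \<subseteq> insert a A \<and> card S = Suc i}
    = {S. S \<subseteq> A \<and> card S = Suc i} \<union> insert a ` {S. S \<subseteq> A \<and> card S = i}"
    (is "?L = ?Avoid \<union> insert a ` ?Small")
proof
  show "?L \<subseteq> ?Avoid \<union> insert a ` ?Small"
  proof
    fix S assume "S \<in> ?L"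
    then have S: "S \<subseteq> insert a A" "card S = Suc i" by auto
    have "finite S" using S(1) \<open>finite A\<close> finite_subset by blast
    show "S \<in> ?Avoid \<union> insert a ` ?Small"
    proof (cases "a \<in> S")
      case True
      then have "S - {a} \<in> ?Small" and "S = insert a (S - {a})"
        using S \<open>finite S\<close> by auto
      then show ?thesis by blast
    next
      case False
      then show ?thesis using S by auto
    qed
  qed
next
  show "?Avoid \<union> insert a ` ?Small \<subseteq> ?L"
  proof
    fix S assume "S \<in> ?Avoid \<union> insert a ` ?Small"
    then show "S \<in> ?L"
    proof
      assume "S \<in> insert a ` ?Small"
      then obtain T where "T \<subseteq> A" "card T = i" "S = insert a T" by auto
      moreover have "finite T" "a \<notin> T"
        using \<open>T \<subseteq> A\<close> \<open>finite A\<close> \<open>a \<notin> A\<close> finite_subset by auto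
      ultimately show ?thesis by auto
    qed auto
  qed
qed

lemma esym_set_insert:
  assumes "finite A" and "a \<notin> A"
  shows "esym_set (Suc i) y (insert a A) = esym_set (Suc i) y A + y a * esym_set i y A"
proof -
  let ?Avoid = "{S. S \<subseteq> A \<and> card S = Suc i}"
  let ?Small = "{S. S \<subseteq> A \<and> card S = i}"
  have fin_Avoid: "finite ?Avoid"
    by (rule finite_subset[of _ "Pow A"]) (auto simp: \<open>finite A\<close>)
  have fin_Small: "finite ?Small"
    by (rule finite_subset[of _ "Pow A"]) (auto simp: \<open>finite A\<close>)
  have disjoint: "?Avoid \<inter> insert a ` ?Small = {}"
    using \<open>a \<notin> A\<close> by auto
  have inj: "inj_on (insert a) ?Small"
  proof (rule inj_onI)
    fix S T assume "S \<in> ?Small" "T \<in> ?Small" "insert a S = insert a T"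
    moreover have "a \<notin> S" "a \<notin> T" using \<open>S \<in> ?Small\<close> \<open>T \<in> ?Small\<close> \<open>a \<notin> A\<close> by blast+
    ultimately show "S = T" by (metis Diff_insert_absorb)
  qed
  have "(\<Sum>S \<in> insert a ` ?Small. \<Prod>j\<in>S. y j) = (\<Sum>T \<in> ?Small. \<Prod>j\<in>insert a T. y j)"
    using sum.reindex[OF inj] by simp
  also have "\<dots> = (\<Sum>T \<in> ?Small. y a * (\<Prod>j\<in>T. y j))"
  proof (rule sum.cong)
    fix T assume "T \<in> ?Small"
    then have "T \<subseteq> A" by simp
    then have "finite T" "a \<notin> T" using \<open>finite A\<close> \<open>a \<notin> A\<close> finite_subset by blast+
    then show "(\<Prod>j\<in>insert a T. y j) = y a * (\<Prod>j\<in>T. y j)" by simp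
  qed simp
  also have "\<dots> = y a * esym_set i y A"
    by (simp add: esym_set_def sum_distrib_left)
  finally have with_a: "(\<Sum>S \<in> insert a ` ?Small. \<Prod>j\<in>S. y j) = y a * esym_set i y A" .
  have "esym_set (Suc i) y (insert a A) = (\<Sum>S \<in> ?Avoid \<union> insert a ` ?Small. \<Prod>j\<in>S. y j)"
    by (simp only: esym_set_def subsets_of_insert_card_Suc[OF assms])
  also have "\<dots> = esym_set (Suc i) y A + (\<Sum>S \<in> insert a ` ?Small. \<Prod>j\<in>S. y j)"
    by (simp only: sum.union_disjoint[OF fin_Avoid finite_imageI[OF fin_Small] disjoint] esym_set_def)
  finally show ?thesis by (simp only: with_a)
qed

lemma elem_sym_0: "elem_sym 0 y n = 1"
  by (simp add: elem_sym_eq_esym_set esym_set_0)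

lemma elem_sym_beyond: "n < i \<Longrightarrow> elem_sym i y n = 0"
  by (simp add: elem_sym_eq_esym_set esym_set_beyond_card)

lemma elem_sym_Suc:
  "elem_sym (Suc i) y (Suc n) = elem_sym (Suc i) y n + y (Suc n) * elem_sym i y n"
proof -
  have "{1..Suc n} = insert (Suc n) {1..n}" by auto
  then show ?thesis
    by (simp add: elem_sym_eq_esym_set esym_set_insert)
qed

definition closed_form ::
    "(nat \<Rightarrow> 'a::comm_ring_1) \<Rightarrow> (nat \<Rightarrow> 'a) \<Rightarrow> (nat \<Rightarrow> 'a) \<Rightarrow> nat \<Rightarrow> nat \<Rightarrow> 'a" where
  "closed_form x y z n m = (\<Sum>k = 0..n. x (m + k) * (\<Prod>j = m..<m + k. z j) * elem_sym (n - k) y n)"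

lemma closed_form_0: "closed_form x y z 0 m = x m"
  by (simp add: closed_form_def elem_sym_0)

lemma closed_form_Suc:
  "closed_form x y z (Suc n) m
    = z m * closed_form x y z n (m + 1) + y (Suc n) * closed_form x y z n m"
proof -
  define t where "t i k = x (m + k) * (\<Prod>j = m..<m + k. z j) * elem_sym i y n" for i k
  text \<open>Split every coefficient e_{n+1-k}(y_1..y_{n+1}) by Pascal's rule.\<close>
  have split: "x (m + k) * (\<Prod>j = m..<m + k. z j) * elem_sym (Suc n - k) y (Suc n)
      = t (Suc n - k) k + (if k \<le> n then y (Suc n) * t (n - k) k else 0)"
    if "k \<le> Suc n" for k
  proof (cases "k \<le> n")
    case True
    then have "Suc n - k = Suc (n - k)" by simp
    with True show ?thesis by (simp add: t_def elem_sym_Suc algebra_simps)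
  next
    case False
    with that have "k = Suc n" by simp
    then show ?thesis by (simp add: t_def elem_sym_0)
  qed
  have "closed_form x y z (Suc n) m
      = (\<Sum>k = 0..Suc n. t (Suc n - k) k)
        + (\<Sum>k = 0..Suc n. if k \<le> n then y (Suc n) * t (n - k) k else 0)"
    unfolding closed_form_def
    by (simp add: split sum.distrib del: sum.atLeast0_atMost_Suc)
  also have "(\<Sum>k = 0..Suc n. if k \<le> n then y (Suc n) * t (n - k) k else 0)
      = y (Suc n) * closed_form x y z n m"
    by (simp add: t_def closed_form_def sum_distrib_left)
  also have "(\<Sum>k = 0..Suc n. t (Suc n - k) k) = (\<Sum>k = 0..n. t (n - k) (Suc k))"
    by (subst sum.atLeast0_atMost_Suc_shift) (simp add: t_def elem_sym_beyond)
  also have "\<dots> = z m * closed_form x y z n (m + 1)"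
    unfolding closed_form_def sum_distrib_left
    by (intro sum.cong) (simp_all add: t_def prod.atLeast_Suc_lessThan algebra_simps)
  finally show ?thesis by (simp add: add.commute)
qed

theorem mainTheorem6:
  fixes x y z :: "nat \<Rightarrow> 'a::comm_ring_1"
    and a :: "nat \<Rightarrow> nat \<Rightarrow> 'a"
  assumes init: "\<And>m. a 0 m = x m"
    and rec: "\<And>n m. n \<ge> 1 \<Longrightarrow> a n m = z m * a (n - 1) (m + 1) + y n * a (n - 1) m"
  shows "a n m = (\<Sum>k = 0..n. x (m + k) * (\<Prod>j = m..<m + k. z j) * elem_sym (n - k) y n)"
proof -
  have "a n m = closed_form x y z n m"
  proof (induction n arbitrary: m)
    case 0
    show ?case by (simp add: init closed_form_0)
  next
    case (Suc n)
    show ?case using rec[of "Suc n" m] by (simp add: Suc.IH closed_form_Suc)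
  qed
  then show ?thesis by (simp add: closed_form_def)
qed

end
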